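(* Let $p$ be a binary word of length $l\ge1$ with $r$ runs. For every $n\ge 0$, $$B_{n,p}(1)=\binom{n-r+1}{l-r+1}.$$
   Context: Binary words, occurrences, $c_p(w)$ (number of occurrences of $p$ as a subsequence of $w$, i.e. number of index tuples $i_1<\cdots<i_l$ with $w_{i_1}\cdots w_{i_l}=p$) and $B_{n,p}(k)=\#\{w\in\{0,1\}^n: c_p(w)=k\}$. A run of a word is a maximal block of consecutive equal letters; its size is its length. Convention: $\binom{a}{b}=0$ unless $0\le b\le a$. *)

theory Defs
  imports Main
begin

definition occ :: "bool list \<Rightarrow> bool list \<Rightarrow> nat" where
  "occ p w = card {I. I \<subseteq> {..<length w} \<and> card I = length p \<and> nths w I = p}"

definition B :: "nat \<Rightarrow> bool list \<Rightarrow> nat \<Rightarrow> nat" where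
  "B n p k = card {w. length w = n \<and> occ p w = k}"

definition runs :: "bool list \<Rightarrow> nat" where
  "runs p = length (remdups_adj p)"

end

theory Submission imports Defs begin

text \<open>
Splitting a word by its first letter, the occurrences of \<open>a # p\<close> in \<open>b # w\<close> are those in \<open>w\<close>
plus, when \<open>a = b\<close>, those of \<open>p\<close> in \<open>w\<close>.  Hence a word \<open>a # w\<close> contains \<open>a # p\<close> exactly once iff
\<open>w\<close> contains \<open>p\<close> exactly once and \<open>a # p\<close> not at all.  Counting the latter words gives a
Pascal-type recurrence in the length \<open>n\<close> and the number of letter changes of the pattern, whose
solution is a binomial coefficient; summing over the position of the first letter yields the
formula, the number of runs being one more than the number of letter changes.
\<close>

definition occurrences :: "bool list \<Rightarrow> bool list \<Rightarrow> nat set set" where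
  "occurrences p w = {I. I \<subseteq> {..<length w} \<and> card I = length p \<and> nths w I = p}"

lemma occ_eq_card_occurrences: "occ p w = card (occurrences p w)"
  unfolding occ_def occurrences_def ..

lemma finite_occurrences: "finite (occurrences p w)"
  by (rule finite_subset[of _ "Pow {..<length w}"]) (auto simp: occurrences_def)

lemma subset_lessThan_Suc_cases:
  assumes "I \<subseteq> {..<Suc n}"
  obtains J where "J \<subseteq> {..<n}" "I = Suc ` J" | J where "J \<subseteq> {..<n}" "I = insert 0 (Suc ` J)"
proof -
  define J where "J = {j. Suc j \<in> I}"
  have "J \<subseteq> {..<n}" using assms by (auto simp: J_def)
  moreover have "I = (if 0 \<in> I then insert 0 (Suc ` J) else Suc ` J)"
    by (auto simp: J_def image_iff) (metis not0_implies_Suc)+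
  ultimately show ?thesis using that by (auto split: if_splits)
qed

lemma Suc_image_in_occurrences_Cons:
  "Suc ` J \<in> occurrences p (b # w) \<longleftrightarrow> J \<in> occurrences p w"
proof -
  have "{j. Suc j \<in> Suc ` J} = J" by auto
  then have "nths (b # w) (Suc ` J) = nths w J" by (simp add: nths_Cons)
  moreover have "Suc ` J \<subseteq> {..<Suc (length w)} \<longleftrightarrow> J \<subseteq> {..<length w}" by auto
  ultimately show ?thesis by (simp add: occurrences_def card_image)
qed

lemma insert_0_Suc_image_in_occurrences_Cons:
  "insert 0 (Suc ` J) \<in> occurrences (a # p) (b # w) \<longleftrightarrow> a = b \<and> J \<in> occurrences p w"
proof -
  have "{j. Suc j \<in> insert 0 (Suc ` J)} = J" by auto
  then have "nths (b # w) (insert 0 (Suc ` J)) = b # nths w J" by (simp add: nths_Cons)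
  moreover have "insert 0 (Suc ` J) \<subseteq> {..<Suc (length w)} \<longleftrightarrow> J \<subseteq> {..<length w}" by auto
  moreover have "J \<subseteq> {..<length w} \<Longrightarrow> card (insert 0 (Suc ` J)) = Suc (card J)"
    by (simp add: card_image finite_subset)
  ultimately show ?thesis by (auto simp: occurrences_def)
qed

lemma occurrences_Cons_Cons:
  "occurrences (a # p) (b # w) =
     image Suc ` occurrences (a # p) w \<union>
     (if a = b then (\<lambda>J. insert 0 (Suc ` J)) ` occurrences p w else {})"
  (is "?L = ?R")
proof
  show "?L \<subseteq> ?R"
  proof
    fix I assume I: "I \<in> ?L"
    then have "I \<subseteq> {..<Suc (length w)}" by (simp add: occurrences_def)
    then show "I \<in> ?R"
      by (rule subset_lessThan_Suc_cases)
        (use I Suc_image_in_occurrences_Cons insert_0_Suc_image_in_occurrences_Cons in auto)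
  qed
qed (auto simp: Suc_image_in_occurrences_Cons insert_0_Suc_image_in_occurrences_Cons)

lemma occ_Nil: "occ [] w = 1"
proof -
  have "occurrences [] w = {{}}"
    by (auto simp: occurrences_def) (metis card_0_eq empty_iff finite_lessThan finite_subset)
  then show ?thesis by (simp add: occ_eq_card_occurrences)
qed

lemma occ_Cons_Nil: "occ (a # p) [] = 0"
  by (simp add: occ_def)

lemma occ_Cons_Cons:
  "occ (a # p) (b # w) = occ (a # p) w + (if a = b then occ p w else 0)"
proof -
  have "inj_on (\<lambda>J. insert 0 (Suc ` J)) X" for X :: "nat set set"
    by (rule inj_onI) (metis Diff_insert_absorb image_iff inj_image_eq_iff inj_Suc nat.distinct(1))
  moreover have "inj_on (image Suc) X" for X :: "nat set set"
    by (simp add: inj_on_def inj_image_eq_iff)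
  ultimately show ?thesis
    unfolding occ_eq_card_occurrences occurrences_Cons_Cons
    by (subst card_Un_disjoint) (auto simp: finite_occurrences card_image)
qed

lemma occ_le_occ_Cons: "occ p w \<le> occ p (b # w)"
  by (cases p) (auto simp: occ_Nil occ_Cons_Cons)

lemma occ_pos_of_occ_Cons_pos: "occ (a # p) w > 0 \<Longrightarrow> occ p w > 0"
proof (induction w)
  case (Cons b w)
  then show ?case using occ_le_occ_Cons[of p w b] by (auto simp: occ_Cons_Cons split: if_splits)
qed (simp add: occ_Cons_Nil)

lemma occ_Cons_same_eq_1:
  "occ (a # p) (a # w) = 1 \<longleftrightarrow> occ p w = 1 \<and> occ (a # p) w = 0"
  using occ_pos_of_occ_Cons_pos[of a p w] by (simp add: occ_Cons_Cons) arith

lemma occ_Cons_other: "a \<noteq> b \<Longrightarrow> occ (a # p) (b # w) = occ (a # p) w"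
  by (simp add: occ_Cons_Cons)

definition count_words :: "nat \<Rightarrow> (bool list \<Rightarrow> bool) \<Rightarrow> nat" where
  "count_words n P = card {w. length w = n \<and> P w}"

lemma count_words_0: "count_words 0 P = (if P [] then 1 else 0)"
proof -
  have "{w. length w = 0 \<and> P w} = (if P [] then {[]} else {})" by auto
  then show ?thesis unfolding count_words_def by simp
qed

lemma count_words_Suc:
  "count_words (Suc n) P = count_words n (\<lambda>w. P (c # w)) + count_words n (\<lambda>w. P ((\<not> c) # w))"
proof -
  have fin: "finite {w::bool list. length w = n \<and> Q w}" for Q
    by (rule finite_subset[OF _ finite_lists_length_eq[of "UNIV :: bool set" n]]) auto
  have "{w. length w = Suc n \<and> P w} =
      Cons c ` {w. length w = n \<and> P (c # w)} \<union> Cons (\<not> c) ` {w. length w = n \<and> P ((\<not> c) # w)}"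
  proof (rule set_eqI)
    fix x show "x \<in> {w. length w = Suc n \<and> P w} \<longleftrightarrow>
        x \<in> Cons c ` {w. length w = n \<and> P (c # w)} \<union> Cons (\<not> c) ` {w. length w = n \<and> P ((\<not> c) # w)}"
      by (cases x; cases "hd x = c") auto
  qed
  then show ?thesis
    unfolding count_words_def by (simp only:) (subst card_Un_disjoint, auto simp: fin card_image)
qed

lemma count_words_cong:
  "(\<And>w. length w = n \<Longrightarrow> P w = Q w) \<Longrightarrow> count_words n P = count_words n Q"
  unfolding count_words_def by (rule arg_cong[where f = card]) auto

lemma count_words_False: "count_words n (\<lambda>w. False) = 0"
  by (simp add: count_words_def)

lemma B_eq_count_words: "B n p k = count_words n (\<lambda>w. occ p w = k)"
  unfolding B_def count_words_def ..

definition once_avoiding :: "bool \<Rightarrow> bool list \<Rightarrow> nat \<Rightarrow> nat" where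
  "once_avoiding a q n = count_words n (\<lambda>w. occ q w = 1 \<and> occ (a # q) w = 0)"

lemma once_avoiding_0: "once_avoiding a q 0 = (if q = [] then 1 else 0)"
  by (cases q) (auto simp: once_avoiding_def count_words_0 occ_Nil occ_Cons_Nil)

lemma once_avoiding_Nil_Suc: "once_avoiding a [] (Suc n) = once_avoiding a [] n"
  unfolding once_avoiding_def count_words_Suc[where c = a]
  by (simp add: occ_Nil occ_Cons_Cons count_words_False)

lemma once_avoiding_Cons_Suc:
  "once_avoiding a (c # q) (Suc n) = once_avoiding c q n + (if a = c then once_avoiding a (c # q) n else 0)"
proof -
  have "occ (a # c # q) (c # w) = 0 \<longleftrightarrow> occ (a # c # q) w = 0 \<and> (a = c \<longrightarrow> occ (c # q) w = 0)" for w
    by (simp add: occ_Cons_Cons)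
  then have starting_c: "count_words n (\<lambda>w. occ (c # q) (c # w) = 1 \<and> occ (a # c # q) (c # w) = 0)
      = once_avoiding c q n"
    unfolding once_avoiding_def occ_Cons_same_eq_1
    by (intro count_words_cong) (use occ_pos_of_occ_Cons_pos[of a "c # q"] in fastforce)
  have "occ (a # c # q) ((\<not> c) # w) = occ (a # c # q) w + (if a = c then 0 else occ (c # q) w)" for w
    by (simp add: occ_Cons_Cons)
  then have starting_not_c: "count_words n (\<lambda>w. occ (c # q) ((\<not> c) # w) = 1 \<and> occ (a # c # q) ((\<not> c) # w) = 0)
      = (if a = c then once_avoiding a (c # q) n else 0)"
    by (auto simp: once_avoiding_def occ_Cons_other count_words_False cong: conj_cong)
  show ?thesis
    unfolding once_avoiding_def[of a "c # q"] count_words_Suc[where c = c]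
    using starting_c starting_not_c by (simp add: once_avoiding_def)
qed

fun changes :: "bool list \<Rightarrow> nat" where
  "changes (a # b # q) = (if a = b then 0 else 1) + changes (b # q)"
| "changes _ = 0"

lemma changes_Cons_le: "changes (a # q) \<le> length q"
  by (induction q arbitrary: a) (auto intro: le_SucI)

lemma runs_eq_Suc_changes: "p \<noteq> [] \<Longrightarrow> runs p = Suc (changes p)"
  unfolding runs_def by (induction p rule: changes.induct) auto

lemma once_avoiding_closed_form:
  "once_avoiding a q n =
     (if changes (a # q) \<le> n then (n - changes (a # q)) choose (length q - changes (a # q)) else 0)"
proof (induction n arbitrary: a q)
  case 0
  show ?case by (cases q) (auto simp: once_avoiding_0)
next
  case (Suc n)
  show ?case
  proof (cases q)
    case Nil
    then show ?thesis using Suc.IH by (simp add: once_avoiding_Nil_Suc)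
  next
    case (Cons c q')
    define k where "k = changes (c # q')"
    have "k \<le> length q'" unfolding k_def by (rule changes_Cons_le)
    show ?thesis
    proof (cases "a = c")
      case True
      have "once_avoiding a q (Suc n) =
          (if k \<le> n then ((n - k) choose (length q' - k)) + ((n - k) choose Suc (length q' - k)) else 0)"
        using True Suc.IH[of c q'] Suc.IH[of c "c # q'"] \<open>k \<le> length q'\<close>
        by (simp add: Cons once_avoiding_Cons_Suc k_def Suc_diff_le)
      also have "\<dots> = (if k \<le> Suc n then (Suc n - k) choose (Suc (length q') - k) else 0)"
        using \<open>k \<le> length q'\<close> by (auto simp: Suc_diff_le le_Suc_eq)
      finally show ?thesis using True by (simp add: Cons k_def)
    next
      case False
      then show ?thesis using Suc.IH[of c q'] by (simp add: Cons once_avoiding_Cons_Suc)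
    qed
  qed
qed

lemma B_Cons_Suc_1: "B (Suc n) (a # p) 1 = B n (a # p) 1 + once_avoiding a p n"
  unfolding B_eq_count_words count_words_Suc[where c = a] once_avoiding_def occ_Cons_same_eq_1
  by (simp add: occ_Cons_other)

lemma B_1_closed_form:
  assumes "p \<noteq> []"
  shows "B n p 1 = (n - changes p) choose (length p - changes p)"
proof -
  obtain a q where p: "p = a # q" using assms by (cases p) auto
  define k where "k = changes (a # q)"
  have "k \<le> length q" unfolding k_def by (rule changes_Cons_le)
  have "B n (a # q) 1 = (n - k) choose (Suc (length q) - k)"
  proof (induction n)
    case 0
    show ?case using \<open>k \<le> length q\<close>
      by (simp add: B_eq_count_words count_words_0 occ_Cons_Nil)
  next
    case (Suc n)
    have "B (Suc n) (a # q) 1 =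
        ((n - k) choose (Suc (length q) - k)) + (if k \<le> n then (n - k) choose (length q - k) else 0)"
      by (simp only: B_Cons_Suc_1 Suc.IH once_avoiding_closed_form k_def)
    also have "\<dots> = (Suc n - k) choose (Suc (length q) - k)"
      using \<open>k \<le> length q\<close> by (auto simp: Suc_diff_le le_Suc_eq)
    finally show ?case .
  qed
  then show ?thesis by (simp add: p k_def)
qed

theorem mainTheorem2:
  fixes p :: "bool list" and n :: nat
  assumes "length p \<ge> 1"
  shows "B n p 1 = (n + 1 - runs p) choose (length p + 1 - runs p)"
proof -
  have "p \<noteq> []" using assms by auto
  then show ?thesis using B_1_closed_form runs_eq_Suc_changes by simp
qed

end
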